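(* Let $\mathcal{A}$ be an associative algebra with unit $I$, and let $w_n,\tilde w_n$ ($n\ge 1$) be $\mathcal{A}$-valued differentiable functions of $\mathbf{t}_o=(t_1,t_3,t_5,\ldots)$. Put $w(\mathbf{t}_o,z)=I+\sum_{n\ge1}w_n(\mathbf{t}_o)z^{-n}$, $\tilde w(\mathbf{t}_o,z)=I+\sum_{n\ge1}\tilde w_n(\mathbf{t}_o)z^{-n}$, $\tilde\xi(\mathbf{t}_o,z)=\sum_{n\ge1}t_{2n-1}z^{2n-1}$, $\psi(\mathbf{t}_o,z)=w(\mathbf{t}_o,z)e^{\tilde\xi(\mathbf{t}_o,z)}$, $\tilde\psi(\mathbf{t}_o,z)=\tilde w(\mathbf{t}_o,z)e^{-\tilde\xi(\mathbf{t}_o,z)}$, and suppose the bilinear identity $$\mathrm{res}_z\big[\psi(\mathbf{s}_o,z)\,\tilde\psi(\mathbf{t}_o,z)\big]=0$$ holds for all $\mathbf{s}_o,\mathbf{t}_o$. Define $\phi:=-w_1$ and $\tilde\theta$ by $w_2=-\tilde\theta+\frac12(\phi_{t_1}+\phi^2)$, and let $F(\lambda):=I-\frac{\lambda}{2}(\phi_{2[\lambda]}-\phi)$. Then, with $\psi=\psi(\mathbf{t}_o,z)$ and $z,\lambda$ indeterminates, $$\frac1\lambda F(\lambda)(\psi_{2[\lambda]}-\psi)-(\psi_{2[\lambda]}+\psi)_{t_1}=\frac{\lambda}{2}\Big(\tilde\theta_{2[\lambda]}-\tilde\theta+\frac12(\phi_{2[\lambda]}-\phi)_{t_1}-\fr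ac12[\phi,\phi_{2[\lambda]}]\Big)F(\lambda)^{-1}(\psi_{2[\lambda]}+\psi).$$
   Context: For a formal series $f(z)=\sum_n f_nz^{-n}$, $\mathrm{res}_z f$ denotes the coefficient $f_1$. Miwa shift notation: $f_{[\lambda]}(\mathbf{t}_o)=f(\mathbf{t}_o+[\lambda])$ with $[\lambda]=(\lambda,\lambda^3/3,\lambda^5/5,\ldots)$, and $f_{2[\lambda]}(\mathbf{t}_o)=f(\mathbf{t}_o+2[\lambda])$; all identities in $\lambda$ are understood as identities of formal power series. $[\,\cdot,\cdot\,]$ is the commutator, and subscript $t_1$ denotes the partial derivative with respect to $t_1$. *)

theory Defs
  imports "HOL-Computational_Algebra.Formal_Power_Series"
          "HOL-Computational_Algebra.Formal_Laurent_Series"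
begin

(* The A-valued differentiable functions of t_o = (t_1,t_3,t_5,...) form a (noncommutative)
   real associative algebra 'r with unit (the constant function I).  The partial derivatives
   d/dt_(2k+1) are given by a family D k (k = 0,1,2,...; D 0 = d/dt_1): real-linear,
   Leibniz, pairwise commuting operators. *)

definition odd_time_derivations :: "(nat \<Rightarrow> 'r::real_algebra_1 \<Rightarrow> 'r) \<Rightarrow> bool" where
  "odd_time_derivations D \<longleftrightarrow>
     (\<forall>k x y. D k (x + y) = D k x + D k y) \<and>
     (\<forall>k c x. D k (c *\<^sub>R x) = c *\<^sub>R D k x) \<and>
     (\<forall>k x y. D k (x * y) = D k x * y + x * D k y) \<and>
     (\<forall>j k x. D j (D k x) = D k (D j x))"

(* Miwa shift f_{2[lambda]} = f(t_o + 2[lambda]) as a formal power series in lambda (Taylor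
   expansion).  Its coefficients S_n f are determined by S_0 f = f and the chain rule
     d/dlambda f(t+2[lambda]) = sum_k 2 lambda^(2k) (d f/dt_(2k+1))(t+2[lambda]),
   i.e. (n+1) S_(n+1) f = sum_{2k <= n} 2 S_(n-2k) (D k f). *)
fun miwa2_coeff :: "(nat \<Rightarrow> 'r::real_algebra_1 \<Rightarrow> 'r) \<Rightarrow> nat \<Rightarrow> 'r \<Rightarrow> 'r" where
  "miwa2_coeff D 0 f = f"
| "miwa2_coeff D (Suc n) f =
     (1 / real (Suc n)) *\<^sub>R (\<Sum>k\<le>n div 2. 2 *\<^sub>R miwa2_coeff D (n - 2 * k) (D k f))"

definition miwa2 :: "(nat \<Rightarrow> 'r::real_algebra_1 \<Rightarrow> 'r) \<Rightarrow> 'r \<Rightarrow> 'r fps" where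
  "miwa2 D f = Abs_fps (\<lambda>n. miwa2_coeff D n f)"

definition fps_cmap :: "('a \<Rightarrow> 'b) \<Rightarrow> 'a fps \<Rightarrow> 'b fps" where
  "fps_cmap g F = Abs_fps (\<lambda>n. g (fps_nth F n))"

definition fls_cmap :: "('a::zero \<Rightarrow> 'b::zero) \<Rightarrow> 'a fls \<Rightarrow> 'b fls" where
  "fls_cmap g F = Abs_fls (\<lambda>n. g (fls_nth F n))"

definition ring_inverse :: "'a::monoid_mult \<Rightarrow> 'a" where
  "ring_inverse x = (THE y. x * y = 1 \<and> y * x = 1)"

(* Formal series in z:  an element of 'r fls in the variable zeta = z^{-1}, so
   z^{-n} = fls_X^n, z = fls_X_inv and res_z f = coefficient of z^{-1} = fls_nth f 1. *)
definition res_z :: "'a::zero fls \<Rightarrow> 'a" where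
  "res_z f = fls_nth f 1"

definition dressing :: "(nat \<Rightarrow> 'r::ring_1) \<Rightarrow> 'r fls" where
  "dressing w = fps_to_fls (Abs_fps (\<lambda>n. if n = 0 then 1 else w n))"

(* Wave functions psi = W e^{xi~(t_o,z)} are represented by their factor W; the factor
   e^{xi~(t_o,z)} is a scalar (central) and d/dt_(2k+1) e^{xi~} = z^(2k+1) e^{xi~}, so
     d/dt_(2k+1) (W e^{xi~}) = (D k W + z^(2k+1) W) e^{xi~}. *)
definition wave_deriv :: "(nat \<Rightarrow> 'r::real_algebra_1 \<Rightarrow> 'r) \<Rightarrow> nat \<Rightarrow> 'r fls \<Rightarrow> 'r fls" where
  "wave_deriv D k W = fls_cmap (D k) W + fls_X_inv ^ (2 * k + 1) * W"

(* The same, for wave functions depending on lambda ((fls-valued) power series in lambda),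
   for the t_1 derivative. *)
definition wave_t1 :: "(nat \<Rightarrow> 'r::real_algebra_1 \<Rightarrow> 'r) \<Rightarrow> 'r fls fps \<Rightarrow> 'r fls fps" where
  "wave_t1 D P = fps_cmap (wave_deriv D 0) P"

(* e^{xi~(2[lambda],z)} = exp(sum_{n odd} (2/n) (lambda z)^n) as a power series in lambda
   with coefficients in the z-series; note xi~(t_o+2[lambda],z) = xi~(t_o,z) + xi~(2[lambda],z). *)
definition miwa2_exp_coeffs :: "real fps" where
  "miwa2_exp_coeffs = fps_compose (fps_exp 1) (Abs_fps (\<lambda>n. if odd n then 2 / real n else 0))"

definition exp_xi_miwa2 :: "'r::real_algebra_1 fls fps" where
  "exp_xi_miwa2 = Abs_fps (\<lambda>n. fls_const (of_real (fps_nth miwa2_exp_coeffs n)) * fls_X_inv ^ n)"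

(* psi_{2[lambda]} = w(t_o+2[lambda],z) e^{xi~(t_o+2[lambda],z)}, represented (after the
   central factor e^{xi~(t_o,z)}) by  (coefficientwise Miwa shift of w) * e^{xi~(2[lambda],z)}. *)
definition wave_miwa2 :: "(nat \<Rightarrow> 'r::real_algebra_1 \<Rightarrow> 'r) \<Rightarrow> (nat \<Rightarrow> 'r) \<Rightarrow> 'r fls fps" where
  "wave_miwa2 D w =
     Abs_fps (\<lambda>m. fps_to_fls (Abs_fps (\<lambda>n. miwa2_coeff D m (if n = 0 then 1 else w n))))
     * exp_xi_miwa2"

definition lift_fps :: "'r::zero fps \<Rightarrow> 'r fls fps" where
  "lift_fps F = fps_cmap fls_const F"

end

theory Submission
  imports Defs
begin

text \<open>
  The Miwa shift \<open>\<psi>(t + 2[\<lambda>])\<close> is the Taylor series of \<open>\<psi>\<close> along the odd-time flows, so its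
  coefficient of \<open>\<lambda>^n\<close> is built from \<open>\<psi>\<close> by the derivatives \<open>\<partial>/\<partial>t_(2k+1)\<close> and multiplication by
  functions of the times. Hence every \<open>\<lambda>\<close>-coefficient of the difference \<open>\<Phi>\<close> of the two sides again
  satisfies the bilinear identity. A solution of the bilinear identity without nonnegative powers of
  \<open>z\<close> vanishes: differentiating in \<open>t_1\<close> lowers its leading term \<open>z^-d\<close> to \<open>z^-1\<close>, whose coefficient is
  the residue in the identity. Multiplication by \<open>1 - \<lambda>z\<close> turns \<open>e^\<xi>(2[\<lambda>],z)\<close> into \<open>1 + \<lambda>z\<close>, so the
  nonnegative powers of \<open>z\<close> in \<open>(1 - \<lambda>z) \<Phi>\<close> only involve \<open>w_1\<close> and \<open>w_2\<close>, and there they cancel by the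
  choice of \<open>\<phi>\<close>, \<open>\<theta>\<close> and \<open>F\<close>. Induction on the \<open>\<lambda>\<close>-degree gives \<open>\<Phi> = 0\<close>.
\<close>

unbundle fps_syntax
notation fls_nth (infixl \<open>$$\<close> 75)

section \<open>Laurent series over a real algebra\<close>

text \<open>Declared first so that the arity \<open>(real_algebra_1) ring_char_0\<close> implied by the instance
  below does not clash with the library's \<open>(field_char_0) ring_char_0\<close>.\<close>

instance fls :: (ring_char_0) ring_char_0 ..

instantiation fls :: (real_algebra_1) real_algebra_1
begin

definition scaleR_fls :: "real \<Rightarrow> 'a fls \<Rightarrow> 'a fls" where
  "c *\<^sub>R f = fls_const (of_real c) * f"

lemma fls_scaleR_nth [simp]: "(c *\<^sub>R f) $$ n = c *\<^sub>R (f $$ n)"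
  by (simp add: scaleR_fls_def scaleR_conv_of_real)

instance
proof
  fix a b :: real and x y :: "'a fls"
  show "a *\<^sub>R (x + y) = a *\<^sub>R x + a *\<^sub>R y"
    by (rule fls_eqI) (simp add: scaleR_add_right)
  show "(a + b) *\<^sub>R x = a *\<^sub>R x + b *\<^sub>R x"
    by (rule fls_eqI) (simp add: scaleR_add_left)
  show "a *\<^sub>R b *\<^sub>R x = (a * b) *\<^sub>R x"
    by (rule fls_eqI) simp
  show "1 *\<^sub>R x = x"
    by (rule fls_eqI) simp
  show "a *\<^sub>R x * y = a *\<^sub>R (x * y)"
    by (simp add: scaleR_fls_def mult.assoc)
  show "x * a *\<^sub>R y = a *\<^sub>R (x * y)"
  proof -
    have "x * fls_const (of_real a) = fls_const (of_real a) * x"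
      by (rule fls_eqI) (simp add: of_real_def)
    then show ?thesis
      by (simp add: scaleR_fls_def flip: mult.assoc)
  qed
qed

end

lemma fls_cmap_nth: "g 0 = 0 \<Longrightarrow> fls_cmap g f $$ n = g (f $$ n)"
  unfolding fls_cmap_def
proof (rule nth_Abs_fls)
  assume "g 0 = 0"
  have "\<forall>\<^sub>\<infinity>n. f $$ - int n = 0"
    by simp
  then show "\<forall>\<^sub>\<infinity>n. g (f $$ - int n) = 0"
    by (rule MOST_mono) (simp add: \<open>g 0 = 0\<close>)
qed

lemma linear_fls_cmap: "linear g \<Longrightarrow> linear (fls_cmap g)"
  by (auto intro!: linearI fls_eqI simp: fls_cmap_nth linear_0 linear_add linear_scale)

lemma fls_cmap_X_inv_power_mult:
  "g 0 = 0 \<Longrightarrow> fls_cmap g (fls_X_inv ^ j * f) = fls_X_inv ^ j * fls_cmap g (f :: 'a::ring_1 fls)"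
  by (rule fls_eqI) (simp add: fls_cmap_nth fls_X_inv_power_times_conv_shift)

lemma linear_X_inv_power_mult: "linear (\<lambda>f. fls_X_inv ^ j * (f :: 'a::real_algebra_1 fls))"
  by (simp add: linear_iff distrib_left)

lemma fls_X_inv_power_commute: "f * fls_X_inv ^ j = fls_X_inv ^ j * (f :: 'a::ring_1 fls)"
  by (simp add: fls_X_inv_power_times_conv_shift)

lemma fps_cmap_nth [simp]: "fps_cmap g f $ n = g (f $ n)"
  by (simp add: fps_cmap_def)

lemma dressing_nth: "dressing w $$ j = (if j < 0 then 0 else if j = 0 then 1 else w (nat j))"
  by (simp add: dressing_def)

section \<open>Taylor coefficients along commuting flows\<close>

lemma sum_atMost_diff_triangle:
  fixes f :: "nat \<Rightarrow> nat \<Rightarrow> nat \<Rightarrow> 'a::comm_monoid_add"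
  shows "(\<Sum>a\<le>n. \<Sum>k\<le>a div 2. f k (a - 2*k) (n - a))
       = (\<Sum>k\<le>n div 2. \<Sum>b\<le>n - 2*k. f k b (n - 2*k - b))"
proof -
  have "(\<Sum>a\<le>n. \<Sum>k\<le>a div 2. f k (a - 2*k) (n - a))
      = (\<Sum>(a,k)\<in>(SIGMA a:{..n}. {..a div 2}). f k (a - 2*k) (n - a))"
    by (rule sum.Sigma) auto
  also have "\<dots> = (\<Sum>(k,b)\<in>(SIGMA k:{..n div 2}. {..n - 2*k}). f k b (n - 2*k - b))"
    by (rule sum.reindex_bij_witness[where i="\<lambda>(k,b). (b + 2*k, k)" and j="\<lambda>(a,k). (k, a - 2*k)"])
       auto
  also have "\<dots> = (\<Sum>k\<le>n div 2. \<Sum>b\<le>n - 2*k. f k b (n - 2*k - b))"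
    by (rule sum.Sigma[symmetric]) auto
  finally show ?thesis .
qed

lemma sum_atMost_rev: "(\<Sum>i\<le>n. f (n - i)) = (\<Sum>i\<le>(n::nat). f i)"
  by (rule sum.reindex_bij_witness[where i="\<lambda>i. n - i" and j="\<lambda>i. n - i"]) auto

lemma sum_atMost_swap_diff: "(\<Sum>i\<le>n. f i (n - i)) = (\<Sum>i\<le>(n::nat). f (n - i) i)"
  by (rule sum.reindex_bij_witness[where i="\<lambda>i. n - i" and j="\<lambda>i. n - i"]) auto

lemma sum_convolution_taylor_recurrence:
  fixes T :: "nat \<Rightarrow> nat \<Rightarrow> 'v::real_vector" and P Q :: "nat \<Rightarrow> nat \<Rightarrow> nat \<Rightarrow> 'v"
  assumes left: "\<And>a b. real (Suc a) *\<^sub>R T (Suc a) b = (\<Sum>k\<le>a div 2. 2 *\<^sub>R P k (a - 2*k) b)"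
    and right: "\<And>a b. real (Suc b) *\<^sub>R T a (Suc b) = (\<Sum>k\<le>b div 2. 2 *\<^sub>R Q k a (b - 2*k))"
  shows "real (Suc m) *\<^sub>R (\<Sum>a\<le>Suc m. T a (Suc m - a))
       = (\<Sum>k\<le>m div 2. 2 *\<^sub>R (\<Sum>a\<le>m - 2*k. P k a (m - 2*k - a) + Q k a (m - 2*k - a)))"
proof -
  have "(\<Sum>a\<le>Suc m. real a *\<^sub>R T a (Suc m - a)) = (\<Sum>a\<le>m. real (Suc a) *\<^sub>R T (Suc a) (m - a))"
    by (subst sum.atMost_Suc_shift) simp
  also have "\<dots> = (\<Sum>k\<le>m div 2. \<Sum>a\<le>m - 2*k. 2 *\<^sub>R P k a (m - 2*k - a))"
    by (simp only: left sum_atMost_diff_triangle[of "\<lambda>k a b. 2 *\<^sub>R P k a b"])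
  finally have left_part: "(\<Sum>a\<le>Suc m. real a *\<^sub>R T a (Suc m - a)) = \<dots>" .
  have "(\<Sum>a\<le>Suc m. real (Suc m - a) *\<^sub>R T a (Suc m - a)) = (\<Sum>b\<le>Suc m. real b *\<^sub>R T (Suc m - b) b)"
    using sum_atMost_rev[of "\<lambda>b. real b *\<^sub>R T (Suc m - b) b" "Suc m"] by simp
  also have "\<dots> = (\<Sum>b\<le>m. real (Suc b) *\<^sub>R T (m - b) (Suc b))"
    by (subst sum.atMost_Suc_shift) simp
  also have "\<dots> = (\<Sum>k\<le>m div 2. \<Sum>b\<le>m - 2*k. 2 *\<^sub>R Q k (m - 2*k - b) b)"
    by (simp only: right sum_atMost_diff_triangle[of "\<lambda>k b a. 2 *\<^sub>R Q k a b"])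
  also have "\<dots> = (\<Sum>k\<le>m div 2. \<Sum>a\<le>m - 2*k. 2 *\<^sub>R Q k a (m - 2*k - a))"
    by (rule sum.cong[OF refl]) (rule sum_atMost_swap_diff[symmetric])
  finally have right_part: "(\<Sum>a\<le>Suc m. real (Suc m - a) *\<^sub>R T a (Suc m - a)) = \<dots>" .
  have "real (Suc m) *\<^sub>R (\<Sum>a\<le>Suc m. T a (Suc m - a))
      = (\<Sum>a\<le>Suc m. real a *\<^sub>R T a (Suc m - a) + real (Suc m - a) *\<^sub>R T a (Suc m - a))"
    unfolding scaleR_sum_right
    by (rule sum.cong[OF refl]) (simp add: of_nat_diff flip: scaleR_add_left)
  also have "\<dots> = (\<Sum>k\<le>m div 2. 2 *\<^sub>R (\<Sum>a\<le>m - 2*k. P k a (m - 2*k - a) + Q k a (m - 2*k - a)))"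
    by (simp only: sum.distrib left_part right_part scaleR_sum_right scaleR_add_right)
  finally show ?thesis .
qed

lemma linear_miwa2_coeff:
  assumes "\<And>k. linear (A k)"
  shows "linear (miwa2_coeff A n)"
proof (induction n rule: less_induct)
  case (less n)
  show ?case
  proof (cases n)
    case 0
    then show ?thesis by (simp add: linear_id[unfolded id_def])
  next
    case (Suc m)
    have "linear (miwa2_coeff A (m - 2*k) \<circ> A k)" for k
      using less Suc assms by (intro linear_compose) auto
    then show ?thesis
      unfolding Suc miwa2_coeff.simps
      by (intro linear_compose_scale_right linear_compose_sum) (auto simp: o_def intro!: linear_compose_scale_right)
  qed
qed

lemma miwa2_coeff_commute:
  assumes "linear L" "\<And>k x. L (A k x) = A k (L x)"
  shows "L (miwa2_coeff A n x) = miwa2_coeff A n (L x)"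
proof (induction n arbitrary: x rule: less_induct)
  case (less n)
  then show ?case
    using assms by (cases n) (simp_all add: linear_scale linear_sum)
qed

lemma miwa2_coeff_leibniz:
  fixes \<beta> :: "'a::real_algebra_1 \<Rightarrow> 'b::real_algebra_1 \<Rightarrow> 'c::real_algebra_1"
  assumes lin_left: "\<And>y. linear (\<lambda>x. \<beta> x y)" and lin_right: "\<And>x. linear (\<beta> x)"
    and lin_C: "\<And>k. linear (C k)"
    and leibniz: "\<And>k x y. C k (\<beta> x y) = \<beta> (A k x) y + \<beta> x (B k y)"
  shows "miwa2_coeff C n (\<beta> x y) = (\<Sum>a\<le>n. \<beta> (miwa2_coeff A a x) (miwa2_coeff B (n - a) y))"
proof (induction n arbitrary: x y rule: less_induct)
  case (less n)
  show ?case
  proof (cases n)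
    case 0
    then show ?thesis by simp
  next
    case (Suc m)
    have "real (Suc m) *\<^sub>R (\<Sum>a\<le>Suc m. \<beta> (miwa2_coeff A a x) (miwa2_coeff B (Suc m - a) y))
        = (\<Sum>k\<le>m div 2. 2 *\<^sub>R (\<Sum>a\<le>m - 2*k.
             \<beta> (miwa2_coeff A a (A k x)) (miwa2_coeff B (m - 2*k - a) y)
             + \<beta> (miwa2_coeff A a x) (miwa2_coeff B (m - 2*k - a) (B k y))))"
      by (rule sum_convolution_taylor_recurrence)
        (simp_all add: linear_sum[OF lin_left] linear_scale[OF lin_left]
          linear_sum[OF lin_right] linear_scale[OF lin_right])
    also have "\<dots> = real (Suc m) *\<^sub>R miwa2_coeff C (Suc m) (\<beta> x y)"
      using less Suc
      by (simp add: leibniz linear_add[OF linear_miwa2_coeff[OF lin_C]] sum.distrib)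
    finally show ?thesis
      unfolding Suc scaleR_cancel_left by auto
  qed
qed

lemma miwa2_coeff_add_commuting:
  assumes lin_A: "\<And>k. linear (A k)" and lin_B: "\<And>k. linear (B k)"
    and comm: "\<And>j k x. A j (B k x) = B k (A j x)"
  shows "miwa2_coeff (\<lambda>k x. A k x + B k x) n x = (\<Sum>a\<le>n. miwa2_coeff A a (miwa2_coeff B (n - a) x))"
proof (induction n arbitrary: x rule: less_induct)
  case (less n)
  show ?case
  proof (cases n)
    case 0
    then show ?thesis by simp
  next
    case (Suc m)
    have A_miwa: "A k (miwa2_coeff B b x) = miwa2_coeff B b (A k x)" for k b x
      by (rule miwa2_coeff_commute) (simp_all add: lin_A comm)
    have "real (Suc m) *\<^sub>R (\<Sum>a\<le>Suc m. miwa2_coeff A a (miwa2_coeff B (Suc m - a) x))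
        = (\<Sum>k\<le>m div 2. 2 *\<^sub>R (\<Sum>a\<le>m - 2*k.
             miwa2_coeff A a (A k (miwa2_coeff B (m - 2*k - a) x))
             + miwa2_coeff A a (miwa2_coeff B (m - 2*k - a) (B k x))))"
      by (rule sum_convolution_taylor_recurrence)
        (simp_all add: linear_sum[OF linear_miwa2_coeff[OF lin_A]]
          linear_scale[OF linear_miwa2_coeff[OF lin_A]])
    also have "\<dots> = real (Suc m) *\<^sub>R miwa2_coeff (\<lambda>k x. A k x + B k x) (Suc m) x"
      using less Suc
      by (simp add: A_miwa linear_add[OF linear_miwa2_coeff[OF lin_A]]
          linear_add[OF linear_miwa2_coeff[OF lin_B]] sum.distrib)
    finally show ?thesis
      unfolding Suc scaleR_cancel_left by auto
  qed
qed

section \<open>The shifted exponential factor\<close>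

lemma fps_mult_X_square_nth:
  "(fps_X\<^sup>2 * f) $ n = (if n < 2 then 0 else f $ (n - 2))"
  by (simp add: fps_X_power_mult_nth)

lemma miwa2_exp_coeffs_ode: "(1 - fps_X\<^sup>2) * fps_deriv miwa2_exp_coeffs = 2 * miwa2_exp_coeffs"
proof -
  define g :: "real fps" where "g = Abs_fps (\<lambda>n. if odd n then 2 / real n else 0)"
  have "(1 - fps_X\<^sup>2) * fps_deriv g = 2"
  proof (rule fps_ext)
    fix n
    have g'_nth: "fps_deriv g $ k = (if even k then 2 else 0)" for k
      by (simp add: g_def del: of_nat_Suc)
    show "((1 - fps_X\<^sup>2) * fps_deriv g) $ n = (2 :: real fps) $ n"
      by (auto simp: left_diff_distrib fps_mult_X_square_nth numeral_fps_const g'_nth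
          simp del: fps_deriv_nth)
  qed
  then show ?thesis
    by (simp add: miwa2_exp_coeffs_def g_def fps_compose_deriv mult.left_commute mult.commute)
qed

lemma miwa2_exp_coeffs_nth: "miwa2_exp_coeffs $ n = (if n = 0 then 1 else 2)"
proof -
  define h where "h = miwa2_exp_coeffs"
  have ode: "((1 - fps_X\<^sup>2) * fps_deriv h) $ n = (2 * h) $ n" for n
    by (simp only: h_def miwa2_exp_coeffs_ode)
  have X2_deriv: "(fps_X\<^sup>2 * fps_deriv h) $ Suc n = real n * h $ n" for n
    by (cases n) (simp_all add: fps_mult_X_square_nth)
  have rec: "real (Suc (Suc n)) * h $ Suc (Suc n) = 2 * h $ Suc n + real n * h $ n" for n
    using ode[of "Suc n"] X2_deriv[of n] by (simp add: left_diff_distrib numeral_fps_const algebra_simps)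
  have rec0: "h $ 1 = 2 * h $ 0"
    using ode[of 0] by (simp add: left_diff_distrib numeral_fps_const fps_mult_X_square_nth)
  have "h $ n = (if n = 0 then 1 else 2)" for n
  proof (induction n rule: less_induct)
    case (less n)
    consider "n = 0" | "n = 1" | m where "n = Suc (Suc m)"
      by (metis One_nat_def not0_implies_Suc)
    then show ?case
    proof cases
      case 1
      then show ?thesis by (simp add: h_def miwa2_exp_coeffs_def)
    next
      case 2
      then show ?thesis using rec0 less[of 0] by simp
    next
      case 3
      have "real (Suc (Suc m)) * h $ Suc (Suc m) = real (Suc (Suc m)) * 2"
        using rec[of m] less[of "Suc m"] less[of m] 3 by (cases "m = 0") (simp_all add: algebra_simps)
      with 3 show ?thesis
        by (simp only: mult_cancel_left of_nat_eq_0_iff) simp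
    qed
  qed
  then show ?thesis by (simp add: h_def)
qed

lemma sum_miwa2_exp_coeffs: "(\<Sum>k\<le>m div 2. miwa2_exp_coeffs $ (m - 2*k)) = real (Suc m)"
proof (induction m rule: less_induct)
  case (less m)
  consider "m = 0" | "m = 1" | m' where "m = Suc (Suc m')"
    by (metis One_nat_def not0_implies_Suc)
  then show ?case
  proof cases
    case 3
    then have "(\<Sum>k\<le>m div 2. miwa2_exp_coeffs $ (m - 2*k))
        = miwa2_exp_coeffs $ m + (\<Sum>k\<le>m' div 2. miwa2_exp_coeffs $ (m' - 2*k))"
      by (simp add: sum.atMost_Suc_shift del: sum.atMost_Suc)
    with 3 less[of m'] show ?thesis
      by (simp add: miwa2_exp_coeffs_nth)
  qed (simp_all add: miwa2_exp_coeffs_nth)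
qed

lemma miwa2_coeff_X_inv_mult:
  "miwa2_coeff (\<lambda>k x. fls_X_inv ^ (2*k+1) * x) n x
     = (miwa2_exp_coeffs $ n) *\<^sub>R (fls_X_inv ^ n * (x :: 'a::real_algebra_1 fls))"
proof (induction n arbitrary: x rule: less_induct)
  case (less n)
  show ?case
  proof (cases n)
    case 0
    then show ?thesis by (simp add: miwa2_exp_coeffs_nth)
  next
    case (Suc m)
    have X_inv_power: "fls_X_inv ^ (m - 2*k) * (fls_X_inv ^ Suc (2*k) * x) = fls_X_inv ^ Suc m * x"
      if "k \<le> m div 2" for k
    proof -
      have "m - 2*k + Suc (2*k) = Suc m"
        using that by presburger
      then show ?thesis
        by (simp only: mult.assoc[symmetric] power_add[symmetric])
    qed
    have "miwa2_coeff (\<lambda>k x. fls_X_inv ^ (2*k+1) * x) n x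
        = (1 / real (Suc m)) *\<^sub>R (\<Sum>k\<le>m div 2. 2 *\<^sub>R (miwa2_exp_coeffs $ (m - 2*k)) *\<^sub>R
            (fls_X_inv ^ (m - 2*k) * (fls_X_inv ^ (2*k+1) * x)))"
      using less Suc by (simp del: power_Suc)
    also have "\<dots> = (1 / real (Suc m)) *\<^sub>R (\<Sum>k\<le>m div 2. (2 * miwa2_exp_coeffs $ (m - 2*k)) *\<^sub>R
        (fls_X_inv ^ Suc m * x))"
      by (rule arg_cong[where f="scaleR _"], rule sum.cong[OF refl]) (simp add: X_inv_power del: power_Suc)
    also have "\<dots> = (1 / real (Suc m)) *\<^sub>R (2 * (\<Sum>k\<le>m div 2. miwa2_exp_coeffs $ (m - 2*k))) *\<^sub>R
        (fls_X_inv ^ Suc m * x)"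
      by (simp only: scaleR_sum_left sum_distrib_left)
    also have "\<dots> = 2 *\<^sub>R (fls_X_inv ^ Suc m * x)"
      by (simp add: sum_miwa2_exp_coeffs del: of_nat_Suc)
    finally show ?thesis
      using Suc by (simp add: miwa2_exp_coeffs_nth)
  qed
qed

lemma exp_xi_miwa2_nth: "exp_xi_miwa2 $ n = (miwa2_exp_coeffs $ n) *\<^sub>R fls_X_inv ^ n"
  by (simp add: exp_xi_miwa2_def scaleR_fls_def)

lemma fps_const_X_inv_commute: "fps_const fls_X_inv * Y = Y * fps_const (fls_X_inv :: 'a::ring_1 fls)"
  by (rule fps_ext) (simp add: fls_X_inv_times_comm)

text \<open>\<open>1 - \<lambda>z\<close> cancels the denominator of
  \<open>e^\<xi>(2[\<lambda>],z) = exp (\<Sum>_(n odd) 2(\<lambda>z)^n/n) = (1 + \<lambda>z)/(1 - \<lambda>z)\<close>.\<close>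

abbreviation one_minus_lambda_z :: "'a::ring_1 fls fps" where
  "one_minus_lambda_z \<equiv> 1 - fps_X * fps_const fls_X_inv"

lemma one_minus_lambda_z_commute: "one_minus_lambda_z * Y = Y * one_minus_lambda_z"
proof -
  have "fps_X * fps_const fls_X_inv * Y = Y * (fps_X * fps_const fls_X_inv)"
    by (metis fps_const_X_inv_commute fps_mult_fps_X_commute mult.assoc)
  then show ?thesis
    by (simp add: left_diff_distrib right_diff_distrib)
qed

lemma one_minus_lambda_z_mult_exp_xi_miwa2:
  "one_minus_lambda_z * (exp_xi_miwa2 :: 'a::real_algebra_1 fls fps) = 1 + fps_X * fps_const fls_X_inv"
proof (rule fps_ext)
  fix n
  show "(one_minus_lambda_z * exp_xi_miwa2) $ n = (1 + fps_X * fps_const fls_X_inv :: 'a fls fps) $ n"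
    by (cases n) (auto simp: left_diff_distrib mult.assoc exp_xi_miwa2_nth miwa2_exp_coeffs_nth scaleR_2
        simp flip: scaleR_diff_left)
qed

section \<open>The Miwa shift along the odd-time flows\<close>

locale odd_time_flows =
  fixes D :: "nat \<Rightarrow> 'r::real_algebra_1 \<Rightarrow> 'r"
  assumes derivations: "odd_time_derivations D"
begin

lemma linear_D: "linear (D k)"
  using derivations by (simp add: odd_time_derivations_def linear_iff)

lemma D_mult: "D k (x * y) = D k x * y + x * D k y"
  using derivations by (simp add: odd_time_derivations_def)

lemma D_commute: "D j (D k x) = D k (D j x)"
  using derivations by (simp add: odd_time_derivations_def)

lemma D_zero [simp]: "D k 0 = 0"
  by (rule linear_0[OF linear_D])

lemma D_one [simp]: "D k 1 = 0"
  using D_mult[of k 1 1] by simp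

lemma D_add: "D k (x + y) = D k x + D k y"
  by (rule linear_add[OF linear_D])

lemma D_uminus: "D k (- x) = - D k x"
  by (rule linear_neg[OF linear_D])

lemma fps_cmap_D_zero: "fps_cmap (D k) 0 = 0"
  by (rule fps_ext) simp

lemma fps_cmap_D_one: "fps_cmap (D k) 1 = 0"
  by (rule fps_ext) simp

lemma fps_cmap_D_const: "fps_cmap (D k) (fps_const x) = fps_const (D k x)"
  by (rule fps_ext) (simp add: fps_const_def)

lemma fps_cmap_D_add: "fps_cmap (D k) (f + g) = fps_cmap (D k) f + fps_cmap (D k) g"
  by (rule fps_ext) (simp add: D_add)

lemma fps_cmap_D_uminus: "fps_cmap (D k) (- f) = - fps_cmap (D k) f"
  by (rule fps_ext) (simp add: D_uminus)

lemma fps_cmap_D_diff: "fps_cmap (D k) (f - g) = fps_cmap (D k) f - fps_cmap (D k) g"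
  using fps_cmap_D_add[of k f "- g"] by (simp add: fps_cmap_D_uminus)

lemma fps_cmap_D_fps_X_mult: "fps_cmap (D k) (fps_X * f) = fps_X * fps_cmap (D k) f"
  by (rule fps_ext) (simp add: fps_X_mult_nth)

lemma linear_miwa2_coeff_D: "linear (miwa2_coeff D n)"
  by (rule linear_miwa2_coeff[OF linear_D])

lemma miwa2_nth [simp]: "miwa2 D x $ n = miwa2_coeff D n x"
  by (simp add: miwa2_def)

lemma miwa2_zero: "miwa2 D 0 = 0"
  by (rule fps_ext) (simp add: linear_0[OF linear_miwa2_coeff_D])

lemma miwa2_add: "miwa2 D (x + y) = miwa2 D x + miwa2 D y"
  by (rule fps_ext) (simp add: linear_add[OF linear_miwa2_coeff_D])

lemma miwa2_uminus: "miwa2 D (- x) = - miwa2 D x"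
  by (rule fps_ext) (simp add: linear_neg[OF linear_miwa2_coeff_D])

lemma miwa2_one: "miwa2 D 1 = 1"
proof (rule fps_ext)
  fix n
  show "miwa2 D 1 $ n = 1 $ n"
    by (cases n) (simp_all add: linear_0[OF linear_miwa2_coeff_D])
qed

lemma miwa2_of_real: "miwa2 D (of_real c) = fps_const (of_real c)"
proof (rule fps_ext)
  fix n
  show "miwa2 D (of_real c) $ n = fps_const (of_real c) $ n"
    using arg_cong[OF miwa2_one, of "\<lambda>f. f $ n"]
    by (simp add: of_real_def linear_scale[OF linear_miwa2_coeff_D])
qed

lemma miwa2_mult: "miwa2 D (x * y) = miwa2 D x * miwa2 D y"
proof (rule fps_ext)
  fix n
  have "miwa2_coeff D n (x * y) = (\<Sum>a\<le>n. miwa2_coeff D a x * miwa2_coeff D (n - a) y)"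
    by (rule miwa2_coeff_leibniz[where \<beta>="(*)", OF _ _ linear_D D_mult])
      (simp_all add: linear_iff distrib_left distrib_right)
  then show "miwa2 D (x * y) $ n = (miwa2 D x * miwa2 D y) $ n"
    by (simp add: fps_mult_nth atLeast0AtMost)
qed

lemma miwa2_D: "miwa2 D (D k x) = fps_cmap (D k) (miwa2 D x)"
  by (rule fps_ext) (simp add: miwa2_coeff_commute[where L="D k" and A=D, OF linear_D D_commute])

lemma linear_fls_cmap_D: "linear (fls_cmap (D k))"
  by (rule linear_fls_cmap[OF linear_D])

lemma linear_wave_deriv: "linear (wave_deriv D k)"
  unfolding wave_deriv_def by (intro linear_compose_add linear_fls_cmap_D linear_X_inv_power_mult)

lemma miwa2_coeff_fls_cmap_nth:
  "miwa2_coeff (\<lambda>k. fls_cmap (D k)) n f $$ j = miwa2_coeff D n (f $$ j)"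
proof (induction n arbitrary: f rule: less_induct)
  case (less n)
  then show ?case
    by (cases n) (simp_all add: fls_nth_sum fls_cmap_nth scaleR_sum_right)
qed

end

definition miwa2_dressing :: "(nat \<Rightarrow> 'r::real_algebra_1 \<Rightarrow> 'r) \<Rightarrow> (nat \<Rightarrow> 'r) \<Rightarrow> 'r fls fps" where
  "miwa2_dressing D w = Abs_fps (\<lambda>m. miwa2_coeff (\<lambda>k. fls_cmap (D k)) m (dressing w))"

context odd_time_flows
begin

lemma wave_miwa2_eq: "wave_miwa2 D w = miwa2_dressing D w * exp_xi_miwa2"
  unfolding wave_miwa2_def miwa2_dressing_def
  by (intro arg_cong2[where f="(*)"] refl fps_ext fls_eqI)
    (simp add: miwa2_coeff_fls_cmap_nth dressing_nth linear_0[OF linear_miwa2_coeff_D])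

lemma wave_miwa2_nth: "wave_miwa2 D w $ n = miwa2_coeff (wave_deriv D) n (dressing w)"
proof -
  define A where "A = (\<lambda>k. fls_cmap (D k))"
  define B :: "nat \<Rightarrow> 'r fls \<Rightarrow> 'r fls" where "B = (\<lambda>k f. fls_X_inv ^ (2*k+1) * f)"
  have A_commute: "miwa2_coeff A a (c *\<^sub>R (fls_X_inv ^ j * f)) = c *\<^sub>R (fls_X_inv ^ j * miwa2_coeff A a f)"
    for a c j f
    by (rule miwa2_coeff_commute[symmetric])
      (simp_all add: A_def linear_iff distrib_left scaleR_add_right fls_cmap_X_inv_power_mult
        linear_scale[OF linear_fls_cmap_D])
  have "wave_miwa2 D w $ n = (\<Sum>a\<le>n. miwa2_coeff A a (dressing w) * exp_xi_miwa2 $ (n - a))"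
    by (simp add: wave_miwa2_eq miwa2_dressing_def A_def fps_mult_nth atLeast0AtMost)
  also have "\<dots> = (\<Sum>a\<le>n. miwa2_coeff A a (miwa2_coeff B (n - a) (dressing w)))"
    by (simp only: exp_xi_miwa2_nth B_def miwa2_coeff_X_inv_mult A_commute mult_scaleR_right
        fls_X_inv_power_commute)
  also have "\<dots> = miwa2_coeff (\<lambda>k f. A k f + B k f) n (dressing w)"
    by (rule miwa2_coeff_add_commuting[symmetric])
      (simp_all add: A_def B_def linear_fls_cmap_D linear_X_inv_power_mult fls_cmap_X_inv_power_mult
        del: power_Suc)
  also have "(\<lambda>k f. A k f + B k f) = wave_deriv D"
    by (simp add: fun_eq_iff wave_deriv_def A_def B_def)
  finally show ?thesis .
qed

end

section \<open>Solutions of the bilinear identity\<close>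

definition solves_bilinear :: "(nat \<Rightarrow> 'r::real_algebra_1 \<Rightarrow> 'r) \<Rightarrow> (nat \<Rightarrow> 'r) \<Rightarrow> 'r fls \<Rightarrow> bool" where
  "solves_bilinear D wt f \<longleftrightarrow> (\<forall>js. res_z (fold (wave_deriv D) js f * dressing wt) = 0)"

lemma res_z_dressing_mult:
  assumes "\<And>k. k \<le> 0 \<Longrightarrow> f $$ k = 0"
  shows "res_z (f * dressing w) = f $$ 1"
proof (cases "f = 0")
  case False
  have subdegree_dressing: "fls_subdegree (dressing w) = 0"
    by (rule fls_subdegree_eqI) (simp_all add: dressing_nth)
  have "1 \<le> fls_subdegree f"
    using False assms by (intro fls_subdegree_geI) auto
  then consider "fls_subdegree f = 1" | "1 < fls_subdegree f"
    by linarith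
  then show ?thesis
  proof cases
    case 1
    then show ?thesis
      by (simp add: res_z_def fls_times_nth(2) subdegree_dressing dressing_nth)
  next
    case 2
    then show ?thesis
      by (simp add: res_z_def fls_times_nth(2) subdegree_dressing nth_less_subdegree_zero)
  qed
qed (simp add: res_z_def)

context odd_time_flows
begin

lemma linear_fold_wave_deriv: "linear (fold (wave_deriv D) js)"
proof (induction js)
  case Nil
  then show ?case by (simp add: linear_id[unfolded id_def])
next
  case (Cons k js)
  then show ?case
    unfolding fold_Cons by (rule linear_compose[OF linear_wave_deriv])
qed

lemma solves_bilinear_add:
  "solves_bilinear D wt f \<Longrightarrow> solves_bilinear D wt g \<Longrightarrow> solves_bilinear D wt (f + g)"
  by (simp add: solves_bilinear_def res_z_def linear_add[OF linear_fold_wave_deriv] distrib_right)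

lemma solves_bilinear_zero: "solves_bilinear D wt 0"
  by (simp add: solves_bilinear_def res_z_def linear_0[OF linear_fold_wave_deriv])

lemma solves_bilinear_sum:
  "(\<And>i. i \<in> I \<Longrightarrow> solves_bilinear D wt (f i)) \<Longrightarrow> solves_bilinear D wt (\<Sum>i\<in>I. f i)"
  by (induction I rule: infinite_finite_induct) (auto simp: solves_bilinear_zero solves_bilinear_add)

lemma solves_bilinear_wave_deriv:
  "solves_bilinear D wt f \<Longrightarrow> solves_bilinear D wt (wave_deriv D k f)"
  unfolding solves_bilinear_def by (metis fold_Cons comp_apply)

lemma wave_deriv_const_mult:
  "wave_deriv D k (fls_const r * f) = fls_const (D k r) * f + fls_const r * wave_deriv D k f"
proof -
  have "fls_cmap (D k) (fls_const r * f) = fls_const (D k r) * f + fls_const r * fls_cmap (D k) f"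
    by (rule fls_eqI) (simp add: fls_cmap_nth D_mult)
  moreover have "fls_X_inv ^ j * (fls_const r * f) = fls_const r * (fls_X_inv ^ j * f)" for j
    by (metis mult.assoc fls_X_inv_power_commute)
  ultimately show ?thesis
    by (simp add: wave_deriv_def distrib_left del: power_Suc)
qed

lemma solves_bilinear_const_mult:
  assumes "solves_bilinear D wt f"
  shows "solves_bilinear D wt (fls_const r * f)"
proof -
  have "res_z (fold (wave_deriv D) js (fls_const r * f) * dressing wt) = 0"
    if "solves_bilinear D wt f" for js r f
    using that
  proof (induction js arbitrary: r f)
    case Nil
    then show ?case
      by (auto simp: solves_bilinear_def res_z_def mult.assoc dest: spec[of _ "[]"])
  next
    case (Cons k js)
    then show ?case
      by (simp add: wave_deriv_const_mult linear_add[OF linear_fold_wave_deriv] distrib_right res_z_def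
          solves_bilinear_wave_deriv)
  qed
  with assms show ?thesis
    by (simp add: solves_bilinear_def)
qed

lemma solves_bilinear_diff:
  assumes "solves_bilinear D wt f" "solves_bilinear D wt g"
  shows "solves_bilinear D wt (f - g)"
proof -
  have "f - g = f + fls_const (- 1) * g"
    by (rule fls_eqI) simp
  then show ?thesis
    using assms by (metis solves_bilinear_add solves_bilinear_const_mult)
qed

lemma solves_bilinear_scaleR: "solves_bilinear D wt f \<Longrightarrow> solves_bilinear D wt (c *\<^sub>R f)"
  unfolding scaleR_fls_def by (rule solves_bilinear_const_mult)

lemma solves_bilinear_miwa2_coeff:
  "solves_bilinear D wt f \<Longrightarrow> solves_bilinear D wt (miwa2_coeff (wave_deriv D) n f)"
proof (induction n arbitrary: f rule: less_induct)
  case (less n)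
  then show ?case
    by (cases n) (simp_all add: solves_bilinear_scaleR solves_bilinear_sum solves_bilinear_wave_deriv)
qed

lemma wave_deriv_power_lowest_nth:
  assumes "\<And>k. k < d \<Longrightarrow> f $$ k = 0"
  shows "\<forall>k < d - int i. (wave_deriv D 0 ^^ i) f $$ k = 0"
    and "(wave_deriv D 0 ^^ i) f $$ (d - int i) = f $$ d"
proof (induction i)
  case (Suc i)
  { case 1 show ?case using Suc.IH by (simp add: wave_deriv_def fls_cmap_nth fls_X_inv_times_conv_shift) }
  { case 2 show ?case using Suc.IH by (simp add: wave_deriv_def fls_cmap_nth fls_X_inv_times_conv_shift) }
qed (simp_all add: assms)

lemma solves_bilinear_eq_0:
  assumes sol: "solves_bilinear D wt f" and nonpos: "\<And>k. k \<le> 0 \<Longrightarrow> f $$ k = 0"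
  shows "f = 0"
proof (rule ccontr)
  assume "f \<noteq> 0"
  define d where "d = fls_subdegree f"
  have "1 \<le> d"
    unfolding d_def using \<open>f \<noteq> 0\<close> nonpos by (intro fls_subdegree_geI) auto
  define g where "g = (wave_deriv D 0 ^^ nat (d - 1)) f"
  have below_d: "\<And>k. k < d \<Longrightarrow> f $$ k = 0"
    by (simp add: d_def nth_less_subdegree_zero)
  have "res_z (g * dressing wt) = g $$ 1"
    using wave_deriv_power_lowest_nth(1)[where d=d and i="nat (d - 1)", OF below_d] \<open>1 \<le> d\<close>
    by (intro res_z_dressing_mult) (simp add: g_def)
  also have "g $$ 1 = f $$ d"
    using wave_deriv_power_lowest_nth(2)[where d=d and i="nat (d - 1)", OF below_d] \<open>1 \<le> d\<close> by (simp add: g_def)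
  also have "\<dots> \<noteq> 0"
    using \<open>f \<noteq> 0\<close> by (simp add: d_def)
  finally show False
    using sol by (simp add: solves_bilinear_def g_def flip: fold_replicate)
qed

end

section \<open>Series in \<open>\<lambda>\<close> of wave functions\<close>

definition fls_nth_fps :: "int \<Rightarrow> 'a::zero fls fps \<Rightarrow> 'a fps" where
  "fls_nth_fps j Y = Abs_fps (\<lambda>n. Y $ n $$ j)"

lemma fls_nth_fps_nth [simp]: "fls_nth_fps j Y $ n = Y $ n $$ j"
  by (simp add: fls_nth_fps_def)

lemma fls_nth_fps_add: "fls_nth_fps j (Y + Y') = fls_nth_fps j Y + fls_nth_fps j Y'"
  by (rule fps_ext) simp

lemma fls_nth_fps_diff: "fls_nth_fps j (Y - Y') = fls_nth_fps j Y - fls_nth_fps j (Y' :: 'a::ab_group_add fls fps)"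
  by (rule fps_ext) simp

lemma fls_nth_fps_const: "fls_nth_fps j (fps_const f) = fps_const (f $$ j)"
  by (rule fps_ext) (simp add: fps_const_def)

lemma fls_nth_fps_fps_X_mult: "fls_nth_fps j (fps_X * Y) = fps_X * fls_nth_fps j (Y :: 'a::ring_1 fls fps)"
  by (rule fps_ext) simp

lemma fls_nth_fps_X_inv_mult:
  "fls_nth_fps j (fps_const fls_X_inv * Y) = fls_nth_fps (j + 1) (Y :: 'a::ring_1 fls fps)"
  by (rule fps_ext) (simp add: fls_X_inv_times_conv_shift)

lemma fls_nth_fps_lift_fps_mult:
  "fls_nth_fps j (lift_fps a * Y) = a * fls_nth_fps j (Y :: 'a::ring_1 fls fps)"
  by (rule fps_ext) (simp add: fps_mult_nth lift_fps_def fls_nth_sum)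

lemma fls_nth_fps_cmap:
  "g 0 = 0 \<Longrightarrow> fls_nth_fps j (fps_cmap (fls_cmap g) Y) = fps_cmap g (fls_nth_fps j Y)"
  by (rule fps_ext) (simp add: fls_cmap_nth)

lemma fps_X_mult_cancel: "fps_X * f = fps_X * g \<Longrightarrow> f = (g :: 'a::ring_1 fps)"
  by (rule fps_ext) (metis fps_X_mult_nth nat.distinct(1) diff_Suc_1)

lemma fps_const_of_real_commute: "fps_const (of_real c) * f = f * (fps_const (of_real c) :: 'a::real_algebra_1 fps)"
  by (rule fps_ext) (simp add: of_real_def)

lemma ring_inverse_fps_mult:
  fixes f :: "'a::ring_1 fps"
  assumes "f $ 0 = 1"
  shows "ring_inverse f * f = 1"
proof -
  define g where "g = fps_left_inverse f 1"
  have left: "g * f = 1"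
    unfolding g_def by (rule fps_left_inverse) (simp add: assms)
  have "g = fps_right_inverse f 1"
    unfolding g_def by (rule fps_left_inverse_eq_fps_right_inverse) (simp_all add: assms)
  then have right: "f * g = 1"
    using fps_right_inverse[of f 1] assms by simp
  have "ring_inverse f = g"
    unfolding ring_inverse_def
  proof (rule the_equality)
    fix g' assume "f * g' = 1 \<and> g' * f = 1"
    then show "g' = g"
      using left by (metis mult.assoc mult_1 mult_1_right)
  qed (simp add: left right)
  with left show ?thesis
    by simp
qed

context odd_time_flows
begin

lemma fls_nth_fps_miwa2_dressing: "fls_nth_fps j (miwa2_dressing D w) = miwa2 D (dressing w $$ j)"
  by (rule fps_ext) (simp add: miwa2_dressing_def miwa2_coeff_fls_cmap_nth)

lemma fls_nth_fps_one_minus_lambda_z_wave_miwa2: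
  "fls_nth_fps j (one_minus_lambda_z * wave_miwa2 D w)
     = miwa2 D (dressing w $$ j) + fps_X * miwa2 D (dressing w $$ (j + 1))"
proof -
  have "one_minus_lambda_z * wave_miwa2 D w = miwa2_dressing D w * (one_minus_lambda_z * exp_xi_miwa2)"
    by (metis wave_miwa2_eq one_minus_lambda_z_commute mult.assoc)
  also have "\<dots> = miwa2_dressing D w + miwa2_dressing D w * (fps_X * fps_const fls_X_inv)"
    by (simp add: one_minus_lambda_z_mult_exp_xi_miwa2 distrib_left)
  also have "miwa2_dressing D w * (fps_X * fps_const fls_X_inv)
      = fps_X * (fps_const fls_X_inv * miwa2_dressing D w)"
    by (metis fps_const_X_inv_commute fps_mult_fps_X_commute mult.assoc)
  finally show ?thesis
    by (simp add: fls_nth_fps_add fls_nth_fps_fps_X_mult fls_nth_fps_X_inv_mult fls_nth_fps_miwa2_dressing)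
qed

lemma fls_nth_fps_one_minus_lambda_z_dressing:
  "fls_nth_fps j (one_minus_lambda_z * fps_const (dressing w))
     = fps_const (dressing w $$ j) - fps_X * fps_const (dressing w $$ (j + 1))"
  by (simp add: left_diff_distrib mult.assoc fls_nth_fps_diff fls_nth_fps_fps_X_mult fls_nth_fps_X_inv_mult
      fls_nth_fps_const fls_X_inv_times_conv_shift)

lemma fps_cmap_fls_cmap_D_one_minus_lambda_z:
  "fps_cmap (fls_cmap (D 0)) (one_minus_lambda_z * Y) = one_minus_lambda_z * fps_cmap (fls_cmap (D 0)) Y"
proof (rule fps_ext)
  fix n
  show "fps_cmap (fls_cmap (D 0)) (one_minus_lambda_z * Y) $ n
      = (one_minus_lambda_z * fps_cmap (fls_cmap (D 0)) Y) $ n"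
    by (cases n) (simp_all add: left_diff_distrib mult.assoc linear_diff[OF linear_fls_cmap_D]
        fls_cmap_X_inv_power_mult[where j=1, simplified])
qed

lemma fps_solves_bilinear_eq_0:
  assumes sol: "\<And>n. solves_bilinear D wt (\<Phi> $ n)"
    and nonpos: "\<And>n j. j \<le> 0 \<Longrightarrow> (one_minus_lambda_z * \<Phi>) $ n $$ j = 0"
  shows "\<Phi> = 0"
proof -
  have one_minus_lambda_z_nth: "(one_minus_lambda_z * \<Phi>) $ n
      = \<Phi> $ n - (if n = 0 then 0 else fls_X_inv * \<Phi> $ (n - 1))" for n
    by (simp add: left_diff_distrib mult.assoc fps_X_mult_nth)
  have "\<Phi> $ n = 0" for n
  proof (induction n)
    case 0
    show ?case
      by (rule solves_bilinear_eq_0[OF sol])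
        (use nonpos[of _ 0] in \<open>simp add: one_minus_lambda_z_nth\<close>)
  next
    case (Suc n)
    show ?case
      by (rule solves_bilinear_eq_0[OF sol])
        (use nonpos[of _ "Suc n"] Suc in \<open>simp add: one_minus_lambda_z_nth\<close>)
  qed
  then show ?thesis
    by (simp add: fps_ext)
qed

end

section \<open>The residual\<close>

text \<open>The difference of the two sides of the theorem, with \<open>F\<close> and the factor on the right left open.\<close>

definition miwa2_residual :: "(nat \<Rightarrow> 'r::real_algebra_1 \<Rightarrow> 'r) \<Rightarrow> (nat \<Rightarrow> 'r) \<Rightarrow> 'r fps \<Rightarrow> 'r fps \<Rightarrow> 'r fls fps"
  where "miwa2_residual D w F h =
    fps_shift 1 (lift_fps F * (wave_miwa2 D w - fps_const (dressing w)))
    - wave_t1 D (wave_miwa2 D w + fps_const (dressing w))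
    - lift_fps h * (wave_miwa2 D w + fps_const (dressing w))"

context odd_time_flows
begin

lemma solves_bilinear_lift_fps_mult_nth:
  "(\<And>m. solves_bilinear D wt (Y $ m)) \<Longrightarrow> solves_bilinear D wt ((lift_fps a * Y) $ n)"
  by (simp add: fps_mult_nth lift_fps_def solves_bilinear_sum solves_bilinear_const_mult)

lemma solves_bilinear_miwa2_residual_nth:
  assumes "solves_bilinear D wt (dressing w)"
  shows "solves_bilinear D wt (miwa2_residual D w F h $ n)"
proof -
  have "solves_bilinear D wt (wave_miwa2 D w $ m)" for m
    by (simp add: wave_miwa2_nth solves_bilinear_miwa2_coeff assms)
  moreover have "solves_bilinear D wt (fps_const (dressing w) $ m)" for m
    by (cases m) (simp_all add: assms solves_bilinear_zero)
  ultimately have sum: "solves_bilinear D wt ((wave_miwa2 D w + fps_const (dressing w)) $ m)"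
    and diff: "solves_bilinear D wt ((wave_miwa2 D w - fps_const (dressing w)) $ m)" for m
    by (simp_all add: solves_bilinear_add solves_bilinear_diff)
  show ?thesis
    unfolding miwa2_residual_def fps_sub_nth fps_shift_nth wave_t1_def fps_cmap_nth
    by (intro solves_bilinear_diff solves_bilinear_wave_deriv solves_bilinear_lift_fps_mult_nth sum diff)
qed

lemma fps_X_mult_one_minus_lambda_z_miwa2_residual:
  fixes w :: "nat \<Rightarrow> 'r"
  defines "\<Psi> \<equiv> fps_const (dressing w)" and "\<Psi>2 \<equiv> wave_miwa2 D w"
  shows "fps_X * (one_minus_lambda_z * miwa2_residual D w F h)
    = lift_fps F * (one_minus_lambda_z * \<Psi>2 - one_minus_lambda_z * \<Psi>)
      - fps_X * (fps_cmap (fls_cmap (D 0)) (one_minus_lambda_z * \<Psi>2 + one_minus_lambda_z * \<Psi>)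
                 + fps_const fls_X_inv * (one_minus_lambda_z * \<Psi>2 + one_minus_lambda_z * \<Psi>))
      - fps_X * (lift_fps h * (one_minus_lambda_z * \<Psi>2 + one_minus_lambda_z * \<Psi>))"
proof -
  define U :: "'r fls fps" where "U = one_minus_lambda_z"
  define Q where "Q = lift_fps F * (\<Psi>2 - \<Psi>)"
  define S where "S = \<Psi>2 + \<Psi>"
  have U_left_commute: "U * (Y * Y') = Y * (U * Y')" for Y Y'
    unfolding U_def by (metis one_minus_lambda_z_commute mult.assoc)
  have "Q $ 0 = 0"
    by (simp add: Q_def \<Psi>_def \<Psi>2_def wave_miwa2_nth lift_fps_def)
  then have "fps_X * fps_shift 1 Q = Q"
    by (intro fps_ext) (auto simp: fps_X_mult_nth)
  then have shift: "fps_X * (U * fps_shift 1 Q) = U * Q"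
    by (simp only: U_left_commute[symmetric])
  have "wave_t1 D S = fps_cmap (fls_cmap (D 0)) S + fps_const fls_X_inv * S"
    by (rule fps_ext) (simp add: wave_t1_def wave_deriv_def)
  then have "miwa2_residual D w F h
      = fps_shift 1 Q - (fps_cmap (fls_cmap (D 0)) S + fps_const fls_X_inv * S) - lift_fps h * S"
    by (simp only: miwa2_residual_def Q_def S_def \<Psi>_def \<Psi>2_def)
  then have "U * miwa2_residual D w F h
      = U * fps_shift 1 Q - (fps_cmap (fls_cmap (D 0)) (U * S) + fps_const fls_X_inv * (U * S))
        - lift_fps h * (U * S)"
    by (simp only: right_diff_distrib distrib_left U_left_commute
        fps_cmap_fls_cmap_D_one_minus_lambda_z[folded U_def, symmetric])
  then have "fps_X * (U * miwa2_residual D w F h)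
      = U * Q - fps_X * (fps_cmap (fls_cmap (D 0)) (U * S) + fps_const fls_X_inv * (U * S))
        - fps_X * (lift_fps h * (U * S))"
    by (simp only: right_diff_distrib shift)
  also have "U * Q = lift_fps F * (U * \<Psi>2 - U * \<Psi>)"
    by (simp only: Q_def U_left_commute right_diff_distrib)
  finally show ?thesis
    by (simp only: U_def S_def distrib_left)
qed

lemma fps_X_mult_fls_nth_fps_miwa2_residual:
  fixes w :: "nat \<Rightarrow> 'r"
  defines "S \<equiv> \<lambda>j. fls_nth_fps j (one_minus_lambda_z * wave_miwa2 D w)
                  + fls_nth_fps j (one_minus_lambda_z * fps_const (dressing w))"
  shows "fps_X * fls_nth_fps j (one_minus_lambda_z * miwa2_residual D w F h)
    = F * (fls_nth_fps j (one_minus_lambda_z * wave_miwa2 D w)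
           - fls_nth_fps j (one_minus_lambda_z * fps_const (dressing w)))
      - fps_X * (fps_cmap (D 0) (S j) + S (j + 1)) - fps_X * (h * S j)"
  using arg_cong[OF fps_X_mult_one_minus_lambda_z_miwa2_residual[of w F h], of "fls_nth_fps j"]
  by (simp only: S_def fls_nth_fps_diff fls_nth_fps_add fls_nth_fps_fps_X_mult fls_nth_fps_X_inv_mult
      fls_nth_fps_lift_fps_mult fls_nth_fps_cmap[where g="D 0", OF D_zero])

end

text \<open>The coefficients of \<open>z^0\<close> and \<open>z^1\<close> of \<open>\<lambda> (1 - \<lambda>z) \<Phi>\<close>, computed in an abstract ring: \<open>l\<close> stands
  for \<open>\<lambda>\<close>, \<open>c\<close> for \<open>1/2\<close>, \<open>a_i\<close> and \<open>b_i\<close> for the shifted and unshifted \<open>w_i\<close>, and \<open>da_1\<close>, \<open>db_1\<close> for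
  their \<open>t_1\<close>-derivatives.\<close>

context
  fixes l c :: "'a::ring_1"
  assumes l_central: "\<And>x. x * l = l * x" and c_central: "\<And>x. x * c = c * x" and half: "c + c = 1"
begin

lemma central_halves: "l * (c * x) + l * (c * x) = l * x" "l * (c * x) + (l * (c * x) + y) = l * x + y"
  by (metis add.assoc distrib_left distrib_right half mult_1)+

lemma residual_coeff_minus_1_identity:
  assumes F: "F = 1 - l * c * (- a1 - - b1)"
  shows "F * (l - - l) - l * ((1 + l * a1) + (1 - l * b1)) = 0"
proof -
  have l_right: "NO_MATCH l x \<Longrightarrow> x * l = l * x" for x
    by (rule l_central)
  show ?thesis
    by (simp add: F algebra_simps central_halves l_right)
qed

lemma residual_coeff_0_identity:
  assumes F: "F = 1 - l * c * (- a1 - - b1)"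
    and hF: "h * F = l * c * ((- a2 + c * (- da1 + (- a1) * (- a1))) - (- b2 + c * (- db1 + (- b1) * (- b1)))
                 + c * (- da1 - - db1) - c * ((- b1) * (- a1) - (- a1) * (- b1)))"
  shows "F * ((1 + l * a1) - (1 - l * b1))
     - l * ((l * da1 - l * db1) + ((a1 + l * a2) + (b1 - l * b2)))
     - l * (h * ((1 + l * a1) + (1 - l * b1))) = 0"
proof -
  \<comment> \<open>The \<open>NO_MATCH\<close> guards keep the commutation rules from looping on \<open>l * l\<close> and \<open>c * l\<close>.\<close>
  have l_left: "NO_MATCH l x \<Longrightarrow> x * (l * y) = l * (x * y)" for x y
    by (metis l_central mult.assoc)
  have c_left: "NO_MATCH l x \<Longrightarrow> NO_MATCH c x \<Longrightarrow> x * (c * y) = c * (x * y)" for x y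
    by (metis c_central mult.assoc)
  have "(1 + l * a1) + (1 - l * b1) = F + F"
    by (simp add: F algebra_simps central_halves)
  then have "h * ((1 + l * a1) + (1 - l * b1)) = h * F + h * F"
    by (simp only: distrib_left)
  also have "\<dots> = l * ((b2 - a2) - (da1 - db1) + c * ((a1 - b1) * (a1 + b1)))"
    unfolding hF by (simp add: algebra_simps central_halves c_left)
  finally have h_sum: "h * ((1 + l * a1) + (1 - l * b1)) = \<dots>" .
  have F_diff: "F * ((1 + l * a1) - (1 - l * b1)) = l * a1 + l * b1 + l * (l * (c * ((a1 - b1) * (a1 + b1))))"
    by (simp add: F algebra_simps l_left)
  show ?thesis
    unfolding h_sum F_diff by (simp add: algebra_simps l_left)
qed

end

definition miwa2_F :: "(nat \<Rightarrow> 'r::real_algebra_1 \<Rightarrow> 'r) \<Rightarrow> 'r \<Rightarrow> 'r fps" where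
  "miwa2_F D \<phi> = 1 - fps_X * fps_const (of_real (1/2)) * (miwa2 D \<phi> - fps_const \<phi>)"

definition miwa2_rhs_factor :: "(nat \<Rightarrow> 'r::real_algebra_1 \<Rightarrow> 'r) \<Rightarrow> 'r \<Rightarrow> 'r \<Rightarrow> 'r fps" where
  "miwa2_rhs_factor D \<phi> \<theta> = fps_X * fps_const (of_real (1/2))
     * (miwa2 D \<theta> - fps_const \<theta>
        + fps_const (of_real (1/2)) * fps_cmap (D 0) (miwa2 D \<phi> - fps_const \<phi>)
        - fps_const (of_real (1/2)) * (fps_const \<phi> * miwa2 D \<phi> - miwa2 D \<phi> * fps_const \<phi>))
     * ring_inverse (miwa2_F D \<phi>)"

context odd_time_flows
begin

lemma miwa2_rhs_factor_mult_miwa2_F: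
  fixes w :: "nat \<Rightarrow> 'r"
  assumes \<phi>: "\<phi> = - w 1" and \<theta>: "\<theta> = - w 2 + of_real (1/2) * (D 0 \<phi> + \<phi> * \<phi>)"
  defines "c \<equiv> fps_const (of_real (1/2))"
    and "a1 \<equiv> miwa2 D (w 1)" and "a2 \<equiv> miwa2 D (w 2)" and "da1 \<equiv> fps_cmap (D 0) (miwa2 D (w 1))"
    and "b1 \<equiv> fps_const (w 1)" and "b2 \<equiv> fps_const (w 2)" and "db1 \<equiv> fps_const (D 0 (w 1))"
  shows "miwa2_rhs_factor D \<phi> \<theta> * miwa2_F D \<phi>
    = fps_X * c * ((- a2 + c * (- da1 + (- a1) * (- a1))) - (- b2 + c * (- db1 + (- b1) * (- b1)))
                   + c * (- da1 - - db1) - c * ((- b1) * (- a1) - (- a1) * (- b1)))"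
proof -
  have miwa2_\<phi>: "miwa2 D \<phi> = - a1" and const_\<phi>: "fps_const \<phi> = - b1"
    by (simp_all add: \<phi> a1_def b1_def miwa2_uminus)
  have "ring_inverse (miwa2_F D \<phi>) * miwa2_F D \<phi> = 1"
    by (rule ring_inverse_fps_mult) (simp add: miwa2_F_def)
  moreover have "miwa2 D \<theta> = - a2 + c * (- da1 + (- a1) * (- a1))"
    by (simp only: \<theta> miwa2_add miwa2_uminus miwa2_of_real miwa2_mult miwa2_D miwa2_\<phi>
        fps_cmap_D_uminus a1_def a2_def da1_def c_def)
  moreover have "fps_const \<theta> = - b2 + c * (- db1 + (- b1) * (- b1))"
    by (simp add: \<theta> \<phi> b1_def b2_def db1_def c_def D_uminus)
  moreover have "fps_cmap (D 0) (miwa2 D \<phi> - fps_const \<phi>) = - da1 - - db1"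
    by (simp add: miwa2_\<phi> const_\<phi> fps_cmap_D_diff fps_cmap_D_uminus fps_cmap_D_const a1_def da1_def b1_def
        db1_def D_uminus)
  ultimately show ?thesis
    by (simp only: miwa2_rhs_factor_def mult.assoc miwa2_\<phi> const_\<phi> mult_1_right flip: c_def)
qed

lemma fls_nth_fps_one_minus_lambda_z_miwa2_residual:
  fixes w :: "nat \<Rightarrow> 'r"
  assumes \<phi>: "\<phi> = - w 1" and \<theta>: "\<theta> = - w 2 + of_real (1/2) * (D 0 \<phi> + \<phi> * \<phi>)" and "j \<le> 0"
  shows "fls_nth_fps j (one_minus_lambda_z * miwa2_residual D w (miwa2_F D \<phi>) (miwa2_rhs_factor D \<phi> \<theta>)) = 0"
proof -
  define F h where "F = miwa2_F D \<phi>" and "h = miwa2_rhs_factor D \<phi> \<theta>"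
  define c :: "'r fps" where "c = fps_const (of_real (1/2))"
  define a1 a2 da1 where "a1 = miwa2 D (w 1)" and "a2 = miwa2 D (w 2)" and "da1 = fps_cmap (D 0) a1"
  define b1 b2 db1 where "b1 = fps_const (w 1)" and "b2 = fps_const (w 2)" and "db1 = fps_const (D 0 (w 1))"
  have X_central: "x * fps_X = fps_X * x" for x :: "'r fps"
    by (rule fps_mult_fps_X_commute[symmetric])
  have c_central: "x * c = c * x" for x
    unfolding c_def by (rule fps_const_of_real_commute[symmetric])
  have half: "c + c = 1"
    by (simp add: c_def flip: fps_const_add of_real_add)
  have F_eq: "F = 1 - fps_X * c * (- a1 - - b1)"
    by (simp add: F_def miwa2_F_def c_def \<phi> a1_def b1_def miwa2_uminus)
  note hF = miwa2_rhs_factor_mult_miwa2_F[OF \<phi> \<theta>, folded F_def h_def c_def a1_def, folded a2_def da1_def b1_def b2_def db1_def]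
  note residual = fps_X_mult_fls_nth_fps_miwa2_residual[where w=w and F=F and h=h]
  note coeff_values = fls_nth_fps_one_minus_lambda_z_wave_miwa2 fls_nth_fps_one_minus_lambda_z_dressing
    dressing_nth miwa2_zero miwa2_one fps_cmap_D_add fps_cmap_D_diff fps_cmap_D_fps_X_mult fps_cmap_D_const
    fps_cmap_D_zero fps_cmap_D_one
  consider "j = 0" | "j = -1" | "j = -2" | "j \<le> -3"
    using assms by linarith
  then have "fps_X * fls_nth_fps j (one_minus_lambda_z * miwa2_residual D w F h) = fps_X * 0"
  proof cases
    case 1
    have "fps_X * fls_nth_fps j (one_minus_lambda_z * miwa2_residual D w F h)
        = F * ((1 + fps_X * a1) - (1 - fps_X * b1))
          - fps_X * ((fps_X * da1 - fps_X * db1) + ((a1 + fps_X * a2) + (b1 - fps_X * b2)))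
          - fps_X * (h * ((1 + fps_X * a1) + (1 - fps_X * b1)))"
      by (simp add: 1 residual coeff_values a1_def a2_def b1_def b2_def da1_def db1_def)
    also have "\<dots> = 0"
      by (rule residual_coeff_0_identity[OF X_central c_central half F_eq hF])
    finally show ?thesis by simp
  next
    case 2
    have "fps_X * fls_nth_fps j (one_minus_lambda_z * miwa2_residual D w F h)
        = F * (fps_X - - fps_X) - fps_X * ((1 + fps_X * a1) + (1 - fps_X * b1))"
      by (simp add: 2 residual coeff_values a1_def b1_def)
    also have "\<dots> = 0"
      by (rule residual_coeff_minus_1_identity[OF X_central c_central half F_eq])
    finally show ?thesis by simp
  qed (simp_all add: residual coeff_values)
  then show ?thesis
    unfolding F_def h_def by (rule fps_X_mult_cancel)
qed

end

theorem theorem3p1: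
  fixes D :: "nat \<Rightarrow> 'r::real_algebra_1 \<Rightarrow> 'r"
    and w wt :: "nat \<Rightarrow> 'r"
    and \<phi> \<theta> :: 'r
    and F :: "'r fps"
    and \<Psi> \<Psi>2 :: "'r fls fps"
  assumes derivs: "odd_time_derivations D"
    and bilinear: "\<forall>js :: nat list.
        res_z (fold (wave_deriv D) js (dressing w) * dressing wt) = 0"
  defines "\<phi> \<equiv> - w 1"
    and "\<theta> \<equiv> - w 2 + of_real (1/2) * (D 0 \<phi> + \<phi> * \<phi>)"
    and "F \<equiv> 1 - fps_X * fps_const (of_real (1/2)) * (miwa2 D \<phi> - fps_const \<phi>)"
    and "\<Psi> \<equiv> fps_const (dressing w)"
    and "\<Psi>2 \<equiv> wave_miwa2 D w"
  shows "fps_shift 1 (lift_fps F * (\<Psi>2 - \<Psi>)) - wave_t1 D (\<Psi>2 + \<Psi>)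
       = lift_fps (fps_X * fps_const (of_real (1/2))
                   * (miwa2 D \<theta> - fps_const \<theta>
                      + fps_const (of_real (1/2)) * fps_cmap (D 0) (miwa2 D \<phi> - fps_const \<phi>)
                      - fps_const (of_real (1/2)) * (fps_const \<phi> * miwa2 D \<phi> - miwa2 D \<phi> * fps_const \<phi>))
                   * ring_inverse F)
         * (\<Psi>2 + \<Psi>)"
proof -
  interpret odd_time_flows D
    by (rule odd_time_flows.intro[OF derivs])
  have F_eq: "F = miwa2_F D \<phi>"
    by (simp add: F_def miwa2_F_def)
  have "solves_bilinear D wt (dressing w)"
    using bilinear by (simp add: solves_bilinear_def)
  then have "solves_bilinear D wt (miwa2_residual D w (miwa2_F D \<phi>) (miwa2_rhs_factor D \<phi> \<theta>) $ n)" for n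
    by (rule solves_bilinear_miwa2_residual_nth)
  moreover have "(one_minus_lambda_z * miwa2_residual D w (miwa2_F D \<phi>) (miwa2_rhs_factor D \<phi> \<theta>)) $ n $$ j = 0"
    if "j \<le> 0" for n j
    using fls_nth_fps_one_minus_lambda_z_miwa2_residual[OF \<phi>_def[THEN meta_eq_to_obj_eq]
        \<theta>_def[THEN meta_eq_to_obj_eq] that]
    by (metis fls_nth_fps_nth fps_zero_nth)
  ultimately have "miwa2_residual D w (miwa2_F D \<phi>) (miwa2_rhs_factor D \<phi> \<theta>) = 0"
    by (rule fps_solves_bilinear_eq_0)
  then show ?thesis
    by (simp add: miwa2_residual_def miwa2_rhs_factor_def F_eq \<Psi>_def \<Psi>2_def)
qed

end
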